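(* Fix $0<p<1$ and $\lambda>0$, and for each $n$ let $\Delta=\Delta(n)=\frac{-\ln\left(1-\sqrt[n]{p}\right)}{\lambda}$. Then the expected response time of the protocol $\mathrm{CORE}(\Delta)$ in the $\mathrm{EDD}(\lambda)$ model with a global clock satisfies $\mathbb{E}[RT]\in O\!\left(\frac{\log n}{\lambda}\right)$ as $n\to\infty$.
   Context: Agents $i_0,i_1,\ldots,i_n$ share an accurate global clock and are connected by a complete reliable network; the delay of each message is an independent exponential random variable with parameter $\lambda$. At time $0$ the supervisor $i_0$ receives an external input. Protocol $\mathrm{CORE}(\Delta)$: at time $0$, $i_0$ sends a "trigger" message to each of $i_1,\ldots,i_n$; upon receiving the trigger, agent $i_k$ waits until the global time is at least $\Delta$ and then performs its action $\alpha_k$ (acting immediately if the trigger arrives after time $\Delta$). With $t_k$ the time at which $i_k$ performs $\alpha_k$, the response time is $RT=\max\{t_1,\ldots,t_n\}$. *)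

theory Defs
  imports "HOL-Probability.Probability" "HOL-Library.Landau_Symbols"
begin

text \<open>The joint law of the delays of the trigger messages to agents 1..n is the
  product measure of n copies of the exponential distribution.\<close>

definition EDD_delay :: "real \<Rightarrow> real measure" where
  "EDD_delay l = density lborel (exponential_density l)"

definition EDD_delays :: "real \<Rightarrow> nat \<Rightarrow> (nat \<Rightarrow> real) measure" where
  "EDD_delays l n = PiM {1..n} (\<lambda>_. EDD_delay l)"

text \<open>Protocol CORE(Delta): agent k receives the trigger at time d k (sent at time 0) and acts
  at time max Delta (d k). The response time is the maximum over k = 1..n.\<close>

definition CORE_RT :: "real \<Rightarrow> nat \<Rightarrow> (nat \<Rightarrow> real) \<Rightarrow> real" where
  "CORE_RT Delta n d = Max ((\<lambda>k. max Delta (d k)) ` {1..n})"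

definition expected_CORE_RT :: "real \<Rightarrow> real \<Rightarrow> nat \<Rightarrow> real" where
  "expected_CORE_RT l Delta n = integral\<^sup>L (EDD_delays l n) (CORE_RT Delta n)"

definition CORE_Delta :: "real \<Rightarrow> real \<Rightarrow> nat \<Rightarrow> real" where
  "CORE_Delta p l n = - ln (1 - root n p) / l"

end

theory Submission
  imports Defs "HOL-Real_Asymp.Real_Asymp"
begin

text \<open>Every agent has acted by time \<open>\<Delta> + \<Sum>\<^sub>k max 0 (d\<^sub>k - \<Delta>)\<close>. By memorylessness an
  exponential delay exceeds \<open>\<Delta>\<close> by \<open>exp (-\<lambda>\<Delta>) / \<lambda>\<close> in expectation, hence
  \<open>E[RT] \<le> \<Delta> + n exp (-\<lambda>\<Delta>) / \<lambda>\<close>. For \<open>\<Delta>(n)\<close> the excess term is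
  \<open>n (1 - p\<^sup>1\<^sup>/\<^sup>n) / \<lambda> \<le> -ln p / \<lambda>\<close>, bounded in \<open>n\<close>, while \<open>1 - e\<^sup>-\<^sup>y \<ge> y / (1 + y)\<close> gives
  \<open>\<lambda>\<Delta> \<le> ln (1 + n / (-ln p))\<close>, which grows like \<open>ln n\<close>.\<close>

lemma (in product_prob_space) has_bochner_integral_PiM_component:
  fixes f :: "'a \<Rightarrow> 'b::{banach, second_countable_topology}"
  assumes "i \<in> I" "f \<in> borel_measurable (M i)" "has_bochner_integral (M i) f x"
  shows "has_bochner_integral (PiM I M) (\<lambda>\<omega>. f (\<omega> i)) x"
proof -
  have component: "(\<lambda>\<omega>. \<omega> i) \<in> measurable (PiM I M) (M i)"
    using assms(1) by (rule measurable_component_singleton)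
  have "has_bochner_integral (distr (PiM I M) (M i) (\<lambda>\<omega>. \<omega> i)) f x"
    using assms(3) by (simp add: PiM_component[OF assms(1)])
  then show ?thesis
    by (simp add: has_bochner_integral_iff integrable_distr_eq[OF component assms(2)]
        integral_distr[OF component assms(2)])
qed

lemma has_bochner_integral_exponential_excess:
  fixes l a :: real
  assumes l: "0 < l" and a: "0 \<le> a"
  shows "has_bochner_integral (density lborel (exponential_density l))
           (\<lambda>x. max 0 (x - a)) (exp (- l * a) / l)"
proof (rule has_bochner_integral_nn_integral)
  show "(\<lambda>x. max 0 (x - a)) \<in> borel_measurable (density lborel (exponential_density l))"
    by measurable
  have "(\<integral>\<^sup>+ x. ennreal (max 0 (x - a)) \<partial>density lborel (exponential_density l))
      = (\<integral>\<^sup>+ x. ennreal (exponential_density l x * max 0 (x - a)) \<partial>lborel)"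
    using l by (subst nn_integral_density)
      (auto simp: exponential_density_nonneg ennreal_mult simp del: ennreal_max_0 intro!: nn_integral_cong)
  also have "\<dots> = (\<integral>\<^sup>+ x. ennreal (exponential_density l (a + x) * max 0 x) \<partial>lborel)"
    using nn_integral_real_affine[of "\<lambda>x. ennreal (exponential_density l x * max 0 (x - a))" 1 a]
    by simp
  \<comment> \<open>the exponential law is the Erlang law of order 0, whose first moment is \<open>1 / l\<close>\<close>
  also have "\<dots> = (\<integral>\<^sup>+ x. ennreal (exp (- l * a)) * ennreal (erlang_density 0 l x * x ^ 1) \<partial>lborel)"
    using a l by (intro nn_integral_cong)
      (auto simp: exponential_density_def ennreal_mult[symmetric] mult_exp_exp algebra_simps)
  also have "\<dots> = ennreal (exp (- l * a)) * (\<integral>\<^sup>+ x. ennreal (erlang_density 0 l x * x ^ 1) \<partial>lborel)"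
    by (rule nn_integral_cmult) auto
  also have "\<dots> = ennreal (exp (- l * a) / l)"
    using l nn_integral_erlang_ith_moment[OF l, of 0 1]
    by (simp add: ennreal_mult[symmetric] divide_ennreal)
  finally show "(\<integral>\<^sup>+ x. ennreal (max 0 (x - a)) \<partial>density lborel (exponential_density l))
      = ennreal (exp (- l * a) / l)" .
qed (use l in auto)

lemma prob_space_EDD_delay: "0 < l \<Longrightarrow> prob_space (EDD_delay l)"
  unfolding EDD_delay_def by (rule prob_space_exponential_density)

lemma prob_space_EDD_delays: "0 < l \<Longrightarrow> prob_space (EDD_delays l n)"
  unfolding EDD_delays_def by (intro prob_space_PiM prob_space_EDD_delay)

lemma has_bochner_integral_EDD_delays_excess:
  assumes "0 < l" "0 \<le> a" "k \<in> {1..n}"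
  shows "has_bochner_integral (EDD_delays l n) (\<lambda>d. max 0 (d k - a)) (exp (- l * a) / l)"
proof -
  interpret product_prob_space "\<lambda>_. EDD_delay l" "{1..n}"
    by (intro product_prob_spaceI prob_space_EDD_delay assms(1))
  show ?thesis
    unfolding EDD_delays_def
    using has_bochner_integral_exponential_excess[OF assms(1,2)]
    by (intro has_bochner_integral_PiM_component assms(3)) (simp_all add: EDD_delay_def)
qed

lemma CORE_RT_ge: "1 \<le> n \<Longrightarrow> \<Delta> \<le> CORE_RT \<Delta> n d"
  unfolding CORE_RT_def by (rule Max_ge_iff[THEN iffD2]) (auto intro!: bexI[of _ 1])

lemma CORE_RT_le_add_sum_excess:
  assumes "1 \<le> n"
  shows "CORE_RT \<Delta> n d \<le> \<Delta> + (\<Sum>k\<in>{1..n}. max 0 (d k - \<Delta>))"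
proof -
  have "max \<Delta> (d k) \<le> \<Delta> + (\<Sum>k\<in>{1..n}. max 0 (d k - \<Delta>))" if "k \<in> {1..n}" for k
  proof -
    have "max 0 (d k - \<Delta>) \<le> (\<Sum>k\<in>{1..n}. max 0 (d k - \<Delta>))"
      using that by (intro member_le_sum) auto
    then show ?thesis by linarith
  qed
  then show ?thesis
    unfolding CORE_RT_def using assms by (subst Max_le_iff) auto
qed

lemma expected_CORE_RT_nonneg: "0 \<le> \<Delta> \<Longrightarrow> 1 \<le> n \<Longrightarrow> 0 \<le> expected_CORE_RT l \<Delta> n"
  unfolding expected_CORE_RT_def
  using order_trans[OF _ CORE_RT_ge] by (simp add: integral_nonneg_AE)

lemma expected_CORE_RT_le:
  assumes l: "0 < l" and \<Delta>: "0 \<le> \<Delta>" and n: "1 \<le> n"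
  shows "expected_CORE_RT l \<Delta> n \<le> \<Delta> + n * exp (- l * \<Delta>) / l"
proof -
  let ?M = "EDD_delays l n"
  define g where "g d = \<Delta> + (\<Sum>k\<in>{1..n}. max 0 (d k - \<Delta>))" for d :: "nat \<Rightarrow> real"
  interpret prob_space ?M by (rule prob_space_EDD_delays[OF l])
  have "has_bochner_integral ?M (\<lambda>_. \<Delta>) \<Delta>"
    using has_bochner_integral_integrable[of ?M "\<lambda>_. \<Delta>"] by (simp add: prob_space)
  then have g: "has_bochner_integral ?M g (\<Delta> + (\<Sum>k\<in>{1..n}. exp (- l * \<Delta>) / l))"
    unfolding g_def using has_bochner_integral_EDD_delays_excess[OF l \<Delta>]
    by (intro has_bochner_integral_add has_bochner_integral_sum)
  have "expected_CORE_RT l \<Delta> n \<le> integral\<^sup>L ?M g"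
    unfolding expected_CORE_RT_def
  proof (rule integral_mono')
    show "integrable ?M g"
      using g by (rule integrable.intros)
    show "CORE_RT \<Delta> n d \<le> g d" for d
      unfolding g_def using n by (rule CORE_RT_le_add_sum_excess)
    show "0 \<le> g d" for d
      unfolding g_def using \<Delta> by (simp add: sum_nonneg)
  qed
  also have "\<dots> = \<Delta> + n * exp (- l * \<Delta>) / l"
    using has_bochner_integral_integral_eq[OF g] by simp
  finally show ?thesis .
qed

lemma one_minus_exp_neg_ge:
  fixes y :: real
  assumes y: "0 < y"
  shows "1 / (1 + 1 / y) \<le> 1 - exp (- y)"
proof -
  have "exp (- y) \<le> 1 / (1 + y)"
    using exp_ge_add_one_self[of y] y by (simp add: exp_minus field_simps)
  then show ?thesis
    using y by (simp add: field_simps)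
qed

lemma root_eq_exp_ln_div: "0 < p \<Longrightarrow> 1 \<le> n \<Longrightarrow> root n p = exp (ln p / n)"
  by (simp add: root_powr_inverse powr_def)

lemma mult_one_minus_root_le: "0 < p \<Longrightarrow> 1 \<le> n \<Longrightarrow> n * (1 - root n p) \<le> - ln p"
  using exp_ge_add_one_self[of "ln p / n"] by (simp add: root_eq_exp_ln_div field_simps)

lemma exp_neg_mult_CORE_Delta:
  assumes "p < 1" "0 < l" "1 \<le> n"
  shows "exp (- l * CORE_Delta p l n) = 1 - root n p"
  using assms by (simp add: CORE_Delta_def)

lemma CORE_Delta_nonneg:
  assumes "0 < p" "p < 1" "0 < l" "1 \<le> n"
  shows "0 \<le> CORE_Delta p l n"
proof -
  have "0 < 1 - root n p" "1 - root n p \<le> 1"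
    using assms real_root_ge_zero[of p n] by auto
  then have "ln (1 - root n p) \<le> 0"
    by simp
  then show ?thesis
    using assms(3) by (simp add: CORE_Delta_def divide_nonpos_pos)
qed

lemma mult_CORE_Delta_le:
  assumes p: "0 < p" "p < 1" and l: "0 < l" and n: "1 \<le> n"
  shows "l * CORE_Delta p l n \<le> ln (1 + n / - ln p)"
proof -
  have c: "0 < - ln p"
    using p by simp
  have y: "0 < - ln p / n"
    using c n by (intro divide_pos_pos) auto
  have pos: "0 < 1 + n / - ln p"
    using c by (intro add_pos_nonneg divide_nonneg_pos) auto
  have "1 / (1 + n / - ln p) \<le> 1 - root n p"
    using one_minus_exp_neg_ge[OF y] p n by (simp add: root_eq_exp_ln_div)
  then have "ln (1 / (1 + n / - ln p)) \<le> ln (1 - root n p)"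
    by (rule ln_mono) (use pos in simp)
  moreover have "ln (1 / (1 + n / - ln p)) = - ln (1 + n / - ln p)"
    using pos by (subst ln_div) auto
  ultimately show ?thesis
    using l unfolding CORE_Delta_def by simp
qed

lemma expected_CORE_RT_CORE_Delta_le:
  assumes p: "0 < p" "p < 1" and l: "0 < l" and n: "1 \<le> n"
  shows "expected_CORE_RT l (CORE_Delta p l n) n \<le> (ln (1 + n / - ln p) - ln p) / l"
proof -
  let ?\<Delta> = "CORE_Delta p l n"
  have "expected_CORE_RT l ?\<Delta> n \<le> ?\<Delta> + n * exp (- l * ?\<Delta>) / l"
    using CORE_Delta_nonneg[OF p l n] by (rule expected_CORE_RT_le[OF l _ n])
  also have "\<dots> = (l * ?\<Delta> + n * (1 - root n p)) / l"
    unfolding exp_neg_mult_CORE_Delta[OF p(2) l n] using l by (simp add: field_simps)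
  also have "\<dots> \<le> (ln (1 + n / - ln p) - ln p) / l"
    using mult_CORE_Delta_le[OF p l n] mult_one_minus_root_le[OF p(1) n] l
    by (intro divide_right_mono) auto
  finally show ?thesis .
qed

theorem theorem3:
  fixes p l :: real
  assumes "0 < p" "p < 1" "0 < l"
  shows "(\<lambda>n::nat. expected_CORE_RT l (CORE_Delta p l n) n) \<in> O(\<lambda>n. ln (real n) / l)"
proof -
  define c where "c = - ln p"
  have c: "0 < c"
    using assms by (simp add: c_def)
  have "\<forall>\<^sub>F n in at_top. norm (expected_CORE_RT l (CORE_Delta p l n) n)
      \<le> 1 * norm ((ln (1 + real n / c) + c) / l)"
    using eventually_ge_at_top[of "1::nat"]
  proof eventually_elim
    case (elim n)
    have "0 \<le> expected_CORE_RT l (CORE_Delta p l n) n"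
      using CORE_Delta_nonneg[OF assms elim] elim by (rule expected_CORE_RT_nonneg)
    moreover have "expected_CORE_RT l (CORE_Delta p l n) n \<le> (ln (1 + real n / c) + c) / l"
      using expected_CORE_RT_CORE_Delta_le[OF assms elim] by (simp add: c_def)
    ultimately show ?case
      by (simp del: abs_divide)
  qed
  then have "(\<lambda>n. expected_CORE_RT l (CORE_Delta p l n) n) \<in> O(\<lambda>n. (ln (1 + real n / c) + c) / l)"
    by (rule bigoI)
  also have "(\<lambda>n::nat. (ln (1 + real n / c) + c) / l) \<in> O(\<lambda>n. ln (real n) / l)"
    using c assms(3) by real_asymp
  finally show ?thesis .
qed

end
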